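(* Let $\Gamma$ be a finite multiset of formulas and $B_1,\ldots,B_n$ formulas such that $\Gamma\longrightarrow B_1,\ldots,B_n$ has a $\mathbf{C}$-proof in which no $\supset$-R and no $\forall$-L rule is used. Then the sequent $\Gamma\longrightarrow B_1\lor\cdots\lor B_n$ has an $\mathbf{I}$-proof. In the case $n=1$, $\Gamma\longrightarrow B_1$ has an $\mathbf{I}$-proof.
   Context: Formulas are first-order formulas built from atomic formulas and the logical constants $\top$, $\bot$ (not counted as atomic) using $\land,\lor,\supset,\forall,\exists$; $\neg A$ abbreviates $A\supset\bot$; $B[t/x]$ is capture-avoiding substitution of term $t$ for free $x$ in $B$. A sequent $\Gamma\longrightarrow\Delta$ is a pair of finite multisets of formulas; $B,\Gamma$ denotes $\Gamma$ with an extra occurrence of $B$. A sequent is an axiom if $\top\in\Delta$ or some formula that is $\bot$ or atomic occurs in both $\Gamma$ and $\Delta$. Writing premises $\Rightarrow$ conclusion, the rules are all instances of: contr-L: $B,B,\Gamma\longrightarrow\Delta\Rightarrow B,\Gamma\longrightarrow\Delta$; contr-R: $\Gamma\longrightarrow\Delta,B,B\Rightarrow\Gamma\longrightarrow\Delta,B$; $\bot$-R: $\Gamma\longrightarrow\Delta,\bot\Rightarrow\Gamma\longrightarrow\Delta,D$; $\land$-L: $B,\Gamma\longrightarrow\Delta\Rightarrow B\land D,\Gamma\longrightarrow\Delta$ and $D,\Gamma\longrightarrow\Delta\Rightarrow B\land D,\Gamma\longrightarrow\Delta$; $\lor$-L: $B,\Gamma\longrightarrow\Delta$ and $D,\Gamma\longrightarrow\Delta\Rightarrow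 B\lor D,\Gamma\longrightarrow\Delta$; $\land$-R: $\Gamma\longrightarrow\Delta,B$ and $\Gamma\longrightarrow\Delta,D\Rightarrow\Gamma\longrightarrow\Delta,B\land D$; $\lor$-R: $\Gamma\longrightarrow\Delta,B\Rightarrow\Gamma\longrightarrow\Delta,B\lor D$ and $\Gamma\longrightarrow\Delta,D\Rightarrow\Gamma\longrightarrow\Delta,B\lor D$; $\supset$-L: $\Gamma\longrightarrow\Delta,B$ and $D,\Gamma\longrightarrow\Theta\Rightarrow B\supset D,\Gamma\longrightarrow\Delta,\Theta$; $\supset$-R: $B,\Gamma\longrightarrow\Delta,D\Rightarrow\Gamma\longrightarrow\Delta,B\supset D$; $\forall$-L: $B[t/x],\Gamma\longrightarrow\Delta\Rightarrow\forall x B,\Gamma\longrightarrow\Delta$; $\exists$-R: $\Gamma\longrightarrow\Delta,B[t/x]\Rightarrow\Gamma\longrightarrow\Delta,\exists x B$ ($t$ any term); $\exists$-L: $B[c/x],\Gamma\longrightarrow\Delta\Rightarrow\exists x B,\Gamma\longrightarrow\Delta$; $\forall$-R: $\Gamma\longrightarrow\Delta,B[c/x]\Rightarrow\Gamma\longrightarrow\Delta,\forall x B$, where the constant $c$ does not occur in the conclusion. A $\mathbf{C}$-proof (classical) is a finite tree of sequents with axioms at the leaves, each internal node being the conclusion of a rule instance whose premises are its children. An $\mathbf{I}$-proof (intuitionistic) is a $\mathbf{C}$-proof in which every sequent has exactly one formula in its succedent. A rule "is used" if some instance of that schema occurs in the proof. *)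

theory Defs
  imports Main "HOL-Library.Multiset"
begin

text \<open>Terms: bound variables (de Bruijn indices, only occurring under quantifiers),
free variables, and function symbols applied to arguments (constants are 0-ary
function symbols).\<close>

datatype tm = Bound nat | FVar nat | Fn nat "tm list"

datatype fm =
    Atom nat "tm list"
  | Top
  | Bot
  | And fm fm
  | Or fm fm
  | Imp fm fm
  | All fm
  | Ex fm

definition Neg :: "fm \<Rightarrow> fm" where "Neg A = Imp A Bot"

fun inst_tm :: "nat \<Rightarrow> tm \<Rightarrow> tm \<Rightarrow> tm" where
  "inst_tm k t (Bound i) = (if i = k then t else Bound i)"
| "inst_tm k t (FVar v) = FVar v"
| "inst_tm k t (Fn f ts) = Fn f (map (inst_tm k t) ts)"

fun inst_fm :: "nat \<Rightarrow> tm \<Rightarrow> fm \<Rightarrow> fm" where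
  "inst_fm k t (Atom p ts) = Atom p (map (inst_tm k t) ts)"
| "inst_fm k t Top = Top"
| "inst_fm k t Bot = Bot"
| "inst_fm k t (And A B) = And (inst_fm k t A) (inst_fm k t B)"
| "inst_fm k t (Or A B) = Or (inst_fm k t A) (inst_fm k t B)"
| "inst_fm k t (Imp A B) = Imp (inst_fm k t A) (inst_fm k t B)"
| "inst_fm k t (All A) = All (inst_fm (Suc k) t A)"
| "inst_fm k t (Ex A) = Ex (inst_fm (Suc k) t A)"

text \<open>B[t/x] for the quantified formula \<open>\<forall>x B\<close> / \<open>\<exists>x B\<close> whose body is B.\<close>
abbreviation subst0 :: "fm \<Rightarrow> tm \<Rightarrow> fm" where
  "subst0 B t \<equiv> inst_fm 0 t B"

fun lc_tm :: "nat \<Rightarrow> tm \<Rightarrow> bool" where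
  "lc_tm k (Bound i) = (i < k)"
| "lc_tm k (FVar v) = True"
| "lc_tm k (Fn f ts) = (\<forall>s\<in>set ts. lc_tm k s)"

fun lc_fm :: "nat \<Rightarrow> fm \<Rightarrow> bool" where
  "lc_fm k (Atom p ts) = (\<forall>s\<in>set ts. lc_tm k s)"
| "lc_fm k Top = True"
| "lc_fm k Bot = True"
| "lc_fm k (And A B) = (lc_fm k A \<and> lc_fm k B)"
| "lc_fm k (Or A B) = (lc_fm k A \<and> lc_fm k B)"
| "lc_fm k (Imp A B) = (lc_fm k A \<and> lc_fm k B)"
| "lc_fm k (All A) = lc_fm (Suc k) A"
| "lc_fm k (Ex A) = lc_fm (Suc k) A"

abbreviation term_ok :: "tm \<Rightarrow> bool" where "term_ok t \<equiv> lc_tm 0 t"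
abbreviation formula_ok :: "fm \<Rightarrow> bool" where "formula_ok A \<equiv> lc_fm 0 A"

fun syms_tm :: "tm \<Rightarrow> nat set" where
  "syms_tm (Bound i) = {}"
| "syms_tm (FVar v) = {}"
| "syms_tm (Fn f ts) = insert f (\<Union>s\<in>set ts. syms_tm s)"

fun syms_fm :: "fm \<Rightarrow> nat set" where
  "syms_fm (Atom p ts) = (\<Union>s\<in>set ts. syms_tm s)"
| "syms_fm Top = {}"
| "syms_fm Bot = {}"
| "syms_fm (And A B) = syms_fm A \<union> syms_fm B"
| "syms_fm (Or A B) = syms_fm A \<union> syms_fm B"
| "syms_fm (Imp A B) = syms_fm A \<union> syms_fm B"
| "syms_fm (All A) = syms_fm A"
| "syms_fm (Ex A) = syms_fm A"

definition syms_seq :: "fm multiset \<Rightarrow> fm multiset \<Rightarrow> nat set" where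
  "syms_seq G D = (\<Union>A\<in>set_mset (G + D). syms_fm A)"

fun is_atomic :: "fm \<Rightarrow> bool" where
  "is_atomic (Atom p ts) = True"
| "is_atomic _ = False"

definition is_axiom :: "fm multiset \<Rightarrow> fm multiset \<Rightarrow> bool" where
  "is_axiom G D \<longleftrightarrow> Top \<in># D \<or> (\<exists>A. (A = Bot \<or> is_atomic A) \<and> A \<in># G \<and> A \<in># D)"

datatype rule = ContrL | ContrR | BotR | AndL | OrL | AndR | OrR | ImpL | ImpR
  | AllL | ExR | ExL | AllR

inductive deriv :: "(fm multiset \<Rightarrow> fm multiset \<Rightarrow> bool) \<Rightarrow> rule set
                    \<Rightarrow> fm multiset \<Rightarrow> fm multiset \<Rightarrow> bool"
  for P R where
  ax: "P G D \<Longrightarrow> is_axiom G D \<Longrightarrow> deriv P R G D"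
| contrL: "P (add_mset B G) D \<Longrightarrow> ContrL \<in> R \<Longrightarrow>
     deriv P R (add_mset B (add_mset B G)) D \<Longrightarrow> deriv P R (add_mset B G) D"
| contrR: "P G (add_mset B D) \<Longrightarrow> ContrR \<in> R \<Longrightarrow>
     deriv P R G (add_mset B (add_mset B D)) \<Longrightarrow> deriv P R G (add_mset B D)"
| botR: "P G (add_mset C D) \<Longrightarrow> BotR \<in> R \<Longrightarrow>
     deriv P R G (add_mset Bot D) \<Longrightarrow> deriv P R G (add_mset C D)"
| andL1: "P (add_mset (And B C) G) D \<Longrightarrow> AndL \<in> R \<Longrightarrow>
     deriv P R (add_mset B G) D \<Longrightarrow> deriv P R (add_mset (And B C) G) D"
| andL2: "P (add_mset (And B C) G) D \<Longrightarrow> AndL \<in> R \<Longrightarrow>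
     deriv P R (add_mset C G) D \<Longrightarrow> deriv P R (add_mset (And B C) G) D"
| orL: "P (add_mset (Or B C) G) D \<Longrightarrow> OrL \<in> R \<Longrightarrow>
     deriv P R (add_mset B G) D \<Longrightarrow> deriv P R (add_mset C G) D \<Longrightarrow>
     deriv P R (add_mset (Or B C) G) D"
| andR: "P G (add_mset (And B C) D) \<Longrightarrow> AndR \<in> R \<Longrightarrow>
     deriv P R G (add_mset B D) \<Longrightarrow> deriv P R G (add_mset C D) \<Longrightarrow>
     deriv P R G (add_mset (And B C) D)"
| orR1: "P G (add_mset (Or B C) D) \<Longrightarrow> OrR \<in> R \<Longrightarrow>
     deriv P R G (add_mset B D) \<Longrightarrow> deriv P R G (add_mset (Or B C) D)"
| orR2: "P G (add_mset (Or B C) D) \<Longrightarrow> OrR \<in> R \<Longrightarrow>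
     deriv P R G (add_mset C D) \<Longrightarrow> deriv P R G (add_mset (Or B C) D)"
| impL: "P (add_mset (Imp B C) G) (D + T) \<Longrightarrow> ImpL \<in> R \<Longrightarrow>
     deriv P R G (add_mset B D) \<Longrightarrow> deriv P R (add_mset C G) T \<Longrightarrow>
     deriv P R (add_mset (Imp B C) G) (D + T)"
| impR: "P G (add_mset (Imp B C) D) \<Longrightarrow> ImpR \<in> R \<Longrightarrow>
     deriv P R (add_mset B G) (add_mset C D) \<Longrightarrow> deriv P R G (add_mset (Imp B C) D)"
| allL: "P (add_mset (All B) G) D \<Longrightarrow> AllL \<in> R \<Longrightarrow> term_ok t \<Longrightarrow>
     deriv P R (add_mset (subst0 B t) G) D \<Longrightarrow> deriv P R (add_mset (All B) G) D"
| exR: "P G (add_mset (Ex B) D) \<Longrightarrow> ExR \<in> R \<Longrightarrow> term_ok t \<Longrightarrow>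
     deriv P R G (add_mset (subst0 B t) D) \<Longrightarrow> deriv P R G (add_mset (Ex B) D)"
| exL: "P (add_mset (Ex B) G) D \<Longrightarrow> ExL \<in> R \<Longrightarrow>
     c \<notin> syms_seq (add_mset (Ex B) G) D \<Longrightarrow>
     deriv P R (add_mset (subst0 B (Fn c [])) G) D \<Longrightarrow> deriv P R (add_mset (Ex B) G) D"
| allR: "P G (add_mset (All B) D) \<Longrightarrow> AllR \<in> R \<Longrightarrow>
     c \<notin> syms_seq G (add_mset (All B) D) \<Longrightarrow>
     deriv P R G (add_mset (subst0 B (Fn c [])) D) \<Longrightarrow> deriv P R G (add_mset (All B) D)"

abbreviation C_provable_with :: "rule set \<Rightarrow> fm multiset \<Rightarrow> fm multiset \<Rightarrow> bool" where
  "C_provable_with R G D \<equiv> deriv (\<lambda>_ _. True) R G D"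

text \<open>An I-proof: a C-proof in which every sequent has exactly one succedent formula.\<close>
abbreviation I_provable :: "fm multiset \<Rightarrow> fm multiset \<Rightarrow> bool" where
  "I_provable G D \<equiv> deriv (\<lambda>_ D'. size D' = 1) UNIV G D"

fun disj :: "fm list \<Rightarrow> fm" where
  "disj [] = Bot"
| "disj [B] = B"
| "disj (B # Bs) = Or B (disj Bs)"

end

theory Submission
  imports Defs "HOL-Combinatorics.Transposition"
begin

(* By induction on the C-proof of G --> D, G --> F has an I-proof for every F that has all
   formulas of D other than \<bottom> among its \<or>-components.
   For \<and>-R, \<supset>-L, \<exists>-R and \<forall>-R the induction hypothesis gives an I-proof of
   G --> F \<or> B for the side formula B, and B is then eliminated: in an I-proof of
   G --> F \<or> X, X can only enter by \<or>-R from a proof of some G' --> X, and that proof may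
   be replaced by any proof of G' --> F built from it. For \<forall>-R, X = B[c/x] and the
   replacement applies \<forall>-R, so c must not occur in G'; \<exists>-L never puts it there, but
   \<forall>-L could, which is why \<forall>-L has to be absent. Eigenvariables are constants, kept
   fresh by swapping function symbols. *)

fun ren_tm :: "(nat \<Rightarrow> nat) \<Rightarrow> tm \<Rightarrow> tm" where
  "ren_tm f (Bound i) = Bound i"
| "ren_tm f (FVar v) = FVar v"
| "ren_tm f (Fn g ts) = Fn (f g) (map (ren_tm f) ts)"

fun ren_fm :: "(nat \<Rightarrow> nat) \<Rightarrow> fm \<Rightarrow> fm" where
  "ren_fm f (Atom p ts) = Atom p (map (ren_tm f) ts)"
| "ren_fm f Top = Top"
| "ren_fm f Bot = Bot"
| "ren_fm f (And A B) = And (ren_fm f A) (ren_fm f B)"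
| "ren_fm f (Or A B) = Or (ren_fm f A) (ren_fm f B)"
| "ren_fm f (Imp A B) = Imp (ren_fm f A) (ren_fm f B)"
| "ren_fm f (All A) = All (ren_fm f A)"
| "ren_fm f (Ex A) = Ex (ren_fm f A)"

abbreviation ren_ms :: "(nat \<Rightarrow> nat) \<Rightarrow> fm multiset \<Rightarrow> fm multiset" where
  "ren_ms f \<equiv> image_mset (ren_fm f)"

lemma ren_tm_inst_tm: "ren_tm f (inst_tm k t s) = inst_tm k (ren_tm f t) (ren_tm f s)"
  by (induction s) auto

lemma ren_fm_inst_fm: "ren_fm f (inst_fm k t A) = inst_fm k (ren_tm f t) (ren_fm f A)"
  by (induction A arbitrary: k) (auto simp: ren_tm_inst_tm)

lemma lc_ren_tm [simp]: "lc_tm k (ren_tm f s) = lc_tm k s"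
  by (induction s) auto

lemma syms_ren_tm [simp]: "syms_tm (ren_tm f s) = f ` syms_tm s"
  by (induction s) (auto simp: image_UN)

lemma syms_ren_fm [simp]: "syms_fm (ren_fm f A) = f ` syms_fm A"
  by (induction A) (auto simp: image_Un image_UN)

lemma ren_tm_comp: "ren_tm f (ren_tm g s) = ren_tm (f \<circ> g) s"
  by (induction s) (auto simp: comp_def)

lemma ren_fm_comp: "ren_fm f (ren_fm g A) = ren_fm (f \<circ> g) A"
  by (induction A) (auto simp: ren_tm_comp comp_def)

lemma ren_tm_id_on: "(\<And>g. g \<in> syms_tm s \<Longrightarrow> f g = g) \<Longrightarrow> ren_tm f s = s"
  by (induction s) (auto intro: map_idI)

lemma ren_fm_id_on: "(\<And>g. g \<in> syms_fm A \<Longrightarrow> f g = g) \<Longrightarrow> ren_fm f A = A"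
  by (induction A) (auto intro: map_idI ren_tm_id_on)

lemma syms_inst_tm: "syms_tm (inst_tm k t s) \<subseteq> syms_tm s \<union> syms_tm t"
  by (induction s) auto

lemma syms_inst_fm: "syms_fm (inst_fm k t A) \<subseteq> syms_fm A \<union> syms_tm t"
  by (induction A arbitrary: k) (use syms_inst_tm in fastforce)+

lemma inst_tm_vacuous: "c \<notin> syms_tm (inst_tm k (Fn c []) s) \<Longrightarrow> inst_tm k t s = s"
  by (induction s) (auto intro: map_idI split: if_splits)

lemma inst_fm_vacuous: "c \<notin> syms_fm (inst_fm k (Fn c []) A) \<Longrightarrow> inst_fm k t A = A"
  by (induction A arbitrary: k) (auto intro!: map_idI intro: inst_tm_vacuous)

lemma finite_syms_tm [simp]: "finite (syms_tm s)"
  by (induction s) auto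

lemma finite_syms_fm [simp]: "finite (syms_fm A)"
  by (induction A) auto

definition syms_ms :: "fm multiset \<Rightarrow> nat set" where
  "syms_ms M = (\<Union>A\<in>set_mset M. syms_fm A)"

lemma syms_ms_simps [simp]:
  "syms_ms {#} = {}"
  "syms_ms (add_mset A M) = syms_fm A \<union> syms_ms M"
  "syms_ms (M + N) = syms_ms M \<union> syms_ms N"
  "syms_ms (ren_ms f M) = f ` syms_ms M"
  by (auto simp: syms_ms_def)

lemma finite_syms_ms [simp]: "finite (syms_ms M)"
  by (simp add: syms_ms_def)

lemma syms_seq_eq [simp]: "syms_seq G D = syms_ms G \<union> syms_ms D"
  by (auto simp: syms_seq_def syms_ms_def)

lemma ex_notin_finite_nat: "finite (A :: nat set) \<Longrightarrow> \<exists>d. d \<notin> A"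
  using ex_new_if_finite infinite_UNIV_nat by blast

lemma ren_fm_transpose_involutory [simp]:
  "ren_fm (transpose c d) (ren_fm (transpose c d) A) = A"
  by (simp add: ren_fm_comp ren_fm_id_on)

lemma ren_fm_transpose_fresh:
  "c \<notin> syms_fm A \<Longrightarrow> d \<notin> syms_fm A \<Longrightarrow> ren_fm (transpose c d) A = A"
  by (rule ren_fm_id_on) (metis transpose_apply_other)

lemma ren_ms_transpose_involutory [simp]:
  "ren_ms (transpose c d) (ren_ms (transpose c d) M) = M"
  by (simp add: multiset.map_comp comp_def)

lemma ren_ms_transpose_fresh:
  "c \<notin> syms_ms M \<Longrightarrow> d \<notin> syms_ms M \<Longrightarrow> ren_ms (transpose c d) M = M"
  by (induction M) (auto simp: ren_fm_transpose_fresh)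

lemma notin_transpose_image_iff: "c \<notin> transpose c d ` X \<longleftrightarrow> d \<notin> X"
  by (simp add: in_transpose_image_iff)

abbreviation I_provable_with :: "rule set \<Rightarrow> fm multiset \<Rightarrow> fm multiset \<Rightarrow> bool" where
  "I_provable_with R G D \<equiv> deriv (\<lambda>_ D'. size D' = 1) R G D"

lemma deriv_root: "deriv P R G D \<Longrightarrow> P G D"
  by (induction rule: deriv.induct) auto

lemma deriv_mono_rules: "deriv P R G D \<Longrightarrow> R \<subseteq> R' \<Longrightarrow> deriv P R' G D"
proof (induction rule: deriv.induct)
  case (allL B G D t) then show ?case by (auto intro: deriv.allL[where t = t])
next
  case (exR G B D t) then show ?case by (auto intro: deriv.exR[where t = t])
next
  case (exL B G D c) then show ?case by (auto intro: deriv.exL[where c = c])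
next
  case (allR G B D c) then show ?case by (auto intro: deriv.allR[where c = c])
qed (auto intro: deriv.intros)

lemma is_axiom_ren: "is_axiom G D \<Longrightarrow> is_axiom (ren_ms f G) (ren_ms f D)"
  unfolding is_axiom_def
proof (elim disjE exE)
  fix A assume A: "(A = Bot \<or> is_atomic A) \<and> A \<in># G \<and> A \<in># D"
  then have "ren_fm f A = Bot \<or> is_atomic (ren_fm f A)"
    by (cases A) auto
  moreover have "ren_fm f A \<in># ren_ms f G" "ren_fm f A \<in># ren_ms f D"
    using A by simp_all
  ultimately show "Top \<in># ren_ms f D \<or> (\<exists>A. (A = Bot \<or> is_atomic A) \<and> A \<in># ren_ms f G \<and> A \<in># ren_ms f D)"
    by blast
qed force

lemma I_rename:
  assumes "I_provable_with R G D" "inj f"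
  shows "I_provable_with R (ren_ms f G) (ren_ms f D)"
  using assms(1)
proof (induction rule: deriv.induct)
  case (allL B G D t)
  then show ?case by (auto intro!: deriv.allL[where t = "ren_tm f t"] simp: ren_fm_inst_fm)
next
  case (exR G B D t)
  then show ?case by (auto intro!: deriv.exR[where t = "ren_tm f t"] simp: ren_fm_inst_fm)
next
  case (exL B G D c)
  then show ?case using \<open>inj f\<close>
    by (auto intro!: deriv.exL[where c = "f c"] simp: ren_fm_inst_fm inj_image_mem_iff)
next
  case (allR G B D c)
  then show ?case using \<open>inj f\<close>
    by (auto intro!: deriv.allR[where c = "f c"] simp: ren_fm_inst_fm inj_image_mem_iff)
qed (auto intro: deriv.intros is_axiom_ren)

text \<open>The premise is only needed for fresh \<open>d\<close>: \<open>c\<close> may occur in \<open>H\<close> and \<open>D\<close>, so it is swapped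
  with \<open>d\<close> there before \<open>\<exists>\<close>-L is applied, and swapped back afterwards.\<close>
lemma I_exL_fresh:
  assumes "ExL \<in> R" "finite A" "c \<notin> syms_ms (add_mset (Ex B) G)"
    and prem: "\<And>d. d \<notin> A \<Longrightarrow> d \<notin> syms_ms (add_mset (Ex B) (H + G)) \<union> syms_ms D \<Longrightarrow>
      I_provable_with R (ren_ms (transpose c d) H + add_mset (subst0 B (Fn c [])) G)
        (ren_ms (transpose c d) D)"
  shows "I_provable_with R (H + add_mset (Ex B) G) D"
proof -
  obtain d where d: "d \<notin> A \<union> syms_ms (add_mset (Ex B) (H + G)) \<union> syms_ms D"
    using ex_notin_finite_nat assms(2) by (metis finite_Un finite_syms_ms finite_syms_fm)
  let ?\<pi> = "transpose c d"
  have "I_provable_with R (add_mset (Ex B) (ren_ms ?\<pi> H + G)) (ren_ms ?\<pi> D)"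
    using prem[of d] d assms(1,3) deriv_root[OF prem[of d]]
    by (intro deriv.exL[where c = c]) (auto simp: notin_transpose_image_iff)
  from I_rename[OF this inj_transpose[of c d]]
  have "I_provable_with R (add_mset (Ex (ren_fm ?\<pi> B)) (H + ren_ms ?\<pi> G)) D"
    by simp
  moreover have "ren_fm ?\<pi> B = B" "ren_ms ?\<pi> G = G"
    using assms(3) d by (auto intro: ren_fm_transpose_fresh ren_ms_transpose_fresh)
  ultimately show ?thesis by simp
qed

lemma I_allR_fresh:
  assumes "AllR \<in> R" "c \<notin> syms_ms G \<union> syms_ms (add_mset (All B) D)"
    and prem: "\<And>d. d \<notin> syms_ms (H + G) \<union> syms_ms (add_mset (All B) D) \<Longrightarrow>
      I_provable_with R (ren_ms (transpose c d) H + G) (add_mset (subst0 B (Fn c [])) D)"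
  shows "I_provable_with R (H + G) (add_mset (All B) D)"
proof -
  obtain d where d: "d \<notin> syms_ms (H + G) \<union> syms_ms (add_mset (All B) D)"
    using ex_notin_finite_nat by (metis finite_Un finite_syms_ms finite_syms_fm)
  let ?\<pi> = "transpose c d"
  have "I_provable_with R (ren_ms ?\<pi> H + G) (add_mset (All B) D)"
    using prem[of d] d assms(1,2) deriv_root[OF prem[of d]]
    by (intro deriv.allR[where c = c]) (auto simp: notin_transpose_image_iff)
  from I_rename[OF this inj_transpose[of c d]]
  have "I_provable_with R (H + ren_ms ?\<pi> G) (add_mset (All (ren_fm ?\<pi> B)) (ren_ms ?\<pi> D))"
    by simp
  moreover have "ren_fm ?\<pi> B = B" "ren_ms ?\<pi> G = G" "ren_ms ?\<pi> D = D"
    using assms(2) d by (auto intro: ren_fm_transpose_fresh ren_ms_transpose_fresh)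
  ultimately show ?thesis by simp
qed

lemma I_weaken: "I_provable_with R G D \<Longrightarrow> I_provable_with R (H + G) D"
proof (induction arbitrary: H rule: deriv.induct)
  case (ax G D)
  then show ?case by (auto intro!: deriv.ax simp: is_axiom_def)
next
  case (exL B G D c)
  show ?case
  proof (rule I_exL_fresh[where A = "{}" and c = c])
    fix d assume "d \<notin> syms_ms (add_mset (Ex B) (H + G)) \<union> syms_ms D"
    then have "ren_ms (transpose c d) D = D"
      using exL.hyps(3) by (intro ren_ms_transpose_fresh) auto
    then show "I_provable_with R (ren_ms (transpose c d) H + add_mset (subst0 B (Fn c [])) G)
        (ren_ms (transpose c d) D)"
      using exL.IH[of "ren_ms (transpose c d) H"] by simp
  qed (use exL.hyps in auto)
next
  case (allR G B D c)
  show ?case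
    by (rule I_allR_fresh[where c = c]) (use allR.hyps allR.IH in auto)
qed (auto intro: deriv.intros)

lemma I_contract: "I_provable_with R (M + M + G) D \<Longrightarrow> ContrL \<in> R \<Longrightarrow> I_provable_with R (M + G) D"
proof (induction M arbitrary: G)
  case (add A M)
  have "I_provable_with R (add_mset A (add_mset A (M + M + G))) D"
    using add.prems(1) by simp
  then have "I_provable_with R (M + M + add_mset A G) D"
    using add.prems(2) deriv_root by (fastforce intro: deriv.contrL)
  then show ?case using add.IH[of "add_mset A G"] add.prems(2) by simp
qed simp

fun disjuncts :: "fm \<Rightarrow> fm set" where
  "disjuncts (Or A B) = insert (Or A B) (disjuncts A \<union> disjuncts B)"
| "disjuncts A = {A}"

lemma in_disjuncts_self [simp]: "F \<in> disjuncts F"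
  by (cases F) auto

lemma disjuncts_trans: "A \<in> disjuncts F \<Longrightarrow> disjuncts A \<subseteq> disjuncts F"
  by (induction F) auto

lemma disjuncts_ren_fm: "disjuncts (ren_fm f F) = ren_fm f ` disjuncts F"
  by (induction F) auto

lemma in_disjuncts_disj: "B \<in> set Bs \<Longrightarrow> B \<in> disjuncts (disj Bs)"
  by (induction Bs rule: disj.induct) auto

lemma I_disjunct_intro:
  "A \<in> disjuncts F \<Longrightarrow> I_provable_with R G {#A#} \<Longrightarrow> OrR \<in> R \<Longrightarrow> I_provable_with R G {#F#}"
  by (induction F) (auto intro: deriv.orR1[where D = "{#}"] deriv.orR2[where D = "{#}"])

lemma I_allR_instance:
  assumes "AllR \<in> R" "c \<notin> syms_fm B"
    and "c \<in> syms_fm (subst0 B (Fn c [])) \<Longrightarrow> c \<notin> syms_ms G"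
    and "I_provable_with R G {#subst0 B (Fn c [])#}"
  shows "I_provable_with R G {#All B#}"
proof (cases "c \<in> syms_fm (subst0 B (Fn c []))")
  case True
  then show ?thesis
    using assms by (intro deriv.allR[where c = c and D = "{#}"]) auto
next
  case False
  obtain e where e: "e \<notin> syms_ms G \<union> syms_fm B"
    using ex_notin_finite_nat by (metis finite_Un finite_syms_ms finite_syms_fm)
  have "subst0 B (Fn e []) = subst0 B (Fn c [])"
    using inst_fm_vacuous[OF False] by simp
  then show ?thesis
    using assms e by (intro deriv.allR[where c = e and D = "{#}"]) auto
qed

lemma I_extension_transpose:
  assumes ext: "\<And>G'. S \<inter> syms_ms G' = {} \<Longrightarrow> I_provable_with R G' {#X#} \<Longrightarrow>
      I_provable_with R (H + G') {#F#}"
    and "c \<notin> S" "d \<notin> S" "ren_fm (transpose c d) X = X" "ren_fm (transpose c d) F = F"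
    and "S \<inter> syms_ms G' = {}" "I_provable_with R G' {#X#}"
  shows "I_provable_with R (ren_ms (transpose c d) H + G') {#F#}"
proof -
  let ?\<pi> = "transpose c d"
  have "S \<inter> syms_ms (ren_ms ?\<pi> G') = {}"
    using assms(2,3,6) by (auto simp: transpose_def)
  moreover have "I_provable_with R (ren_ms ?\<pi> G') {#X#}"
    using I_rename[OF assms(7) inj_transpose[of c d]] assms(4) by simp
  ultimately have "I_provable_with R (H + ren_ms ?\<pi> G') {#F#}"
    by (rule ext)
  from I_rename[OF this inj_transpose[of c d]] show ?thesis
    using assms(5) by simp
qed

text \<open>\<open>S\<close> holds eigenvariables that must stay out of every antecedent of the proof; \<open>\<forall>\<close>-L
  could bring them in, and \<open>\<exists>\<close>-L cannot, as they occur in the succedent \<open>F \<or> X\<close>.\<close>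
lemma I_Or_elim_avoiding:
  assumes "I_provable_with R G {#Or F X#}" "AllL \<notin> R"
    and "S \<subseteq> syms_fm X" "S \<inter> syms_ms G = {}"
    and "\<And>G'. S \<inter> syms_ms G' = {} \<Longrightarrow> I_provable_with R G' {#X#} \<Longrightarrow>
      I_provable_with R (H + G') {#F#}"
  shows "I_provable_with R (H + G) {#F#}"
  using assms
proof (induction G "{#Or F X#}" arbitrary: H rule: deriv.induct)
  case (contrL B G)
  then show ?case by (auto intro: deriv.contrL)
next
  case (contrR G B D)
  then show ?case using deriv_root[OF contrR.hyps(3)] by simp
next
  case (botR G C D)
  then have "I_provable_with R (H + G) {#Bot#}"
    using I_weaken[of R G "{#Bot#}" H] by simp
  then show ?case using botR by (auto intro: deriv.botR[where D = "{#}"])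
next
  case (andL1 B C G)
  have "I_provable_with R (H + add_mset B G) {#F#}"
    using andL1.prems by (intro andL1.hyps(4)) auto
  then show ?case using andL1.hyps by (auto intro: deriv.andL1)
next
  case (andL2 B C G)
  have "I_provable_with R (H + add_mset C G) {#F#}"
    using andL2.prems by (intro andL2.hyps(4)) auto
  then show ?case using andL2.hyps by (auto intro: deriv.andL2)
next
  case (orL B C G)
  have "I_provable_with R (H + add_mset B G) {#F#}" "I_provable_with R (H + add_mset C G) {#F#}"
    using orL.prems by (intro orL.hyps(4,6); auto)+
  then show ?case using orL.hyps by (auto intro: deriv.orL)
next
  case (orR1 G B C D)
  then show ?case using I_weaken[of R G "{#F#}" H] by simp
next
  case (orR2 G B C D)
  then show ?case by auto
next
  case (impL B C G D T)
  have "D = {#}"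
    using deriv_root[OF impL.hyps(3)] by (cases D) auto
  then have "T = {#Or F X#}"
    using impL.hyps(7) by simp
  then have "I_provable_with R (H + add_mset C G) {#F#}"
    using impL.prems by (intro impL.hyps(6)) auto
  moreover have "I_provable_with R (H + G) {#B#}"
    using impL.hyps(3) \<open>D = {#}\<close> I_weaken[of R G "{#B#}" H] by simp
  ultimately show ?case
    using impL by (auto intro: deriv.impL[where D = "{#}" and T = "{#F#}", simplified])
next
  case (exL B G c)
  have c: "c \<notin> syms_ms (add_mset (Ex B) G)" "c \<notin> syms_fm F" "c \<notin> syms_fm X"
    using exL.hyps(3) by auto
  then have "c \<notin> S"
    using exL.prems(2) by auto
  show ?case
  proof (rule I_exL_fresh[where A = "syms_fm X" and c = c])
    fix d assume d: "d \<notin> syms_fm X" "d \<notin> syms_ms (add_mset (Ex B) (H + G)) \<union> syms_ms {#F#}"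
    let ?\<pi> = "transpose c d"
    have \<pi>_fixes: "ren_fm ?\<pi> X = X" "ren_fm ?\<pi> F = F"
      using c d by (auto intro: ren_fm_transpose_fresh)
    have "d \<notin> S"
      using d exL.prems(2) by auto
    have "S \<inter> syms_ms (add_mset (subst0 B (Fn c [])) G) = {}"
      using exL.prems(2,3) c syms_inst_fm[of 0 "Fn c []" B] by auto
    moreover have "I_provable_with R (ren_ms ?\<pi> H + G') {#F#}"
      if "S \<inter> syms_ms G' = {}" "I_provable_with R G' {#X#}" for G'
      using exL.prems(4) \<open>c \<notin> S\<close> \<open>d \<notin> S\<close> \<pi>_fixes that by (rule I_extension_transpose)
    ultimately have "I_provable_with R (ren_ms ?\<pi> H + add_mset (subst0 B (Fn c [])) G) {#F#}"
      using exL.prems(1,2) by (intro exL.hyps(5)) auto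
    then show "I_provable_with R (ren_ms ?\<pi> H + add_mset (subst0 B (Fn c [])) G) (ren_ms ?\<pi> {#F#})"
      using \<pi>_fixes by simp
  qed (use exL.hyps c in auto)
qed (auto simp: is_axiom_def)

lemma I_Or_elim:
  assumes "I_provable_with R G {#Or F X#}" "AllL \<notin> R" "ContrL \<in> R"
    and "\<And>G'. I_provable_with R G' {#X#} \<Longrightarrow> I_provable_with R (G + G') {#F#}"
  shows "I_provable_with R G {#F#}"
proof -
  have "I_provable_with R (G + G) {#F#}"
    by (rule I_Or_elim_avoiding[where S = "{}", OF assms(1,2)]) (use assms(4) in auto)
  then show ?thesis
    using I_contract[of R G "{#}"] assms(3) by simp
qed

lemma I_Or_And_elim:
  assumes "I_provable_with (- {AllL}) G {#Or F B#}" "I_provable_with (- {AllL}) G {#Or F C#}"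
    and "And B C \<in> disjuncts F"
  shows "I_provable_with (- {AllL}) G {#F#}"
proof (rule I_Or_elim[OF assms(1)])
  fix G' assume B: "I_provable_with (- {AllL}) G' {#B#}"
  show "I_provable_with (- {AllL}) (G + G') {#F#}"
  proof (rule I_Or_elim)
    show "I_provable_with (- {AllL}) (G + G') {#Or F C#}"
      using I_weaken[OF assms(2), of G'] by (simp add: add.commute)
  next
    fix G'' assume "I_provable_with (- {AllL}) G'' {#C#}"
    then have "I_provable_with (- {AllL}) (G + G' + G'') {#And B C#}"
      using I_weaken[OF B, of "G + G''"] I_weaken[of _ G'' _ "G + G'"]
      by (intro deriv.andR[where D = "{#}", simplified]) (simp_all add: ac_simps)
    then show "I_provable_with (- {AllL}) (G + G' + G'') {#F#}"
      using I_disjunct_intro assms(3) by blast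
  qed simp_all
qed simp_all

lemma I_Or_Imp_elim:
  assumes "I_provable_with (- {AllL}) G {#Or F B#}" "I_provable_with (- {AllL}) (add_mset C G) {#F#}"
  shows "I_provable_with (- {AllL}) (add_mset (Imp B C) G) {#F#}"
proof (rule I_Or_elim[where X = B])
  show "I_provable_with (- {AllL}) (add_mset (Imp B C) G) {#Or F B#}"
    using I_weaken[OF assms(1), of "{#Imp B C#}"] by simp
next
  fix G' assume "I_provable_with (- {AllL}) G' {#B#}"
  then have "I_provable_with (- {AllL}) (G + G') {#B#}"
    and "I_provable_with (- {AllL}) (add_mset C (G + G')) {#F#}"
    using I_weaken[of _ G' _ G] I_weaken[OF assms(2), of G'] by (simp_all add: ac_simps)
  then have "I_provable_with (- {AllL}) (add_mset (Imp B C) (G + G')) {#F#}"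
    by (intro deriv.impL[where D = "{#}", simplified]) auto
  then show "I_provable_with (- {AllL}) (add_mset (Imp B C) G + G') {#F#}"
    by simp
qed simp_all

lemma I_Or_Ex_elim:
  assumes "I_provable_with (- {AllL}) G {#Or F (subst0 B t)#}" "term_ok t" "Ex B \<in> disjuncts F"
  shows "I_provable_with (- {AllL}) G {#F#}"
proof (rule I_Or_elim[OF assms(1)])
  fix G' assume "I_provable_with (- {AllL}) G' {#subst0 B t#}"
  then have "I_provable_with (- {AllL}) G' {#Ex B#}"
    using assms(2) by (intro deriv.exR[where D = "{#}", simplified]) auto
  then have "I_provable_with (- {AllL}) G' {#F#}"
    using I_disjunct_intro[OF assms(3)] by simp
  then show "I_provable_with (- {AllL}) (G + G') {#F#}"
    by (rule I_weaken)
qed simp_all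

lemma I_Or_All_elim:
  assumes "I_provable_with (- {AllL}) G {#Or F (subst0 B (Fn c []))#}"
    and "c \<notin> syms_ms (add_mset (All B) G)" "All B \<in> disjuncts F"
  shows "I_provable_with (- {AllL}) G {#F#}"
proof -
  let ?X = "subst0 B (Fn c [])"
  have "I_provable_with (- {AllL}) ({#} + G) {#F#}"
  proof (rule I_Or_elim_avoiding[OF assms(1), where S = "{c} \<inter> syms_fm ?X"])
    fix G' assume "({c} \<inter> syms_fm ?X) \<inter> syms_ms G' = {}" "I_provable_with (- {AllL}) G' {#?X#}"
    then have "I_provable_with (- {AllL}) G' {#All B#}"
      using assms(2) by (intro I_allR_instance[where c = c]) auto
    then show "I_provable_with (- {AllL}) ({#} + G') {#F#}"
      using I_disjunct_intro[OF assms(3)] by simp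
  qed (use assms(2) in auto)
  then show ?thesis by simp
qed

definition covers :: "fm \<Rightarrow> fm multiset \<Rightarrow> bool" where
  "covers F D \<longleftrightarrow> (\<forall>A\<in>#D. A \<noteq> Bot \<longrightarrow> A \<in> disjuncts F)"

lemma covers_add_mset:
  "covers F (add_mset A D) \<longleftrightarrow> (A \<noteq> Bot \<longrightarrow> A \<in> disjuncts F) \<and> covers F D"
  by (auto simp: covers_def)

lemma covers_Or: "covers F D \<Longrightarrow> covers (Or F X) (add_mset X D)"
  by (auto simp: covers_def)

lemma I_axiom_covers:
  assumes "is_axiom G D" "covers F D"
  shows "I_provable_with (- {AllL}) G {#F#}"
proof -
  consider "Top \<in># D" | A where "A = Bot \<or> is_atomic A" "A \<in># G" "A \<in># D"
    using assms(1) by (auto simp: is_axiom_def)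
  then show ?thesis
  proof cases
    case 1
    show ?thesis
      by (rule I_disjunct_intro[where A = Top])
        (use 1 assms(2) in \<open>auto simp: covers_def is_axiom_def intro: deriv.ax\<close>)
  next
    case (2 A)
    then have A: "I_provable_with (- {AllL}) G {#A#}"
      by (auto simp: is_axiom_def intro: deriv.ax)
    show ?thesis
    proof (cases "A = Bot")
      case True
      then show ?thesis using A by (auto intro: deriv.botR[where D = "{#}"])
    next
      case False
      then have "A \<in> disjuncts F"
        using 2 assms(2) by (auto simp: covers_def)
      then show ?thesis using A by (rule I_disjunct_intro) simp
    qed
  qed
qed

lemma I_exL_covers:
  assumes "c \<notin> syms_seq (add_mset (Ex B) G) D" "covers F D"
    and IH: "\<And>F. covers F D \<Longrightarrow> I_provable_with (- {AllL}) (add_mset (subst0 B (Fn c [])) G) {#F#}"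
  shows "I_provable_with (- {AllL}) (add_mset (Ex B) G) {#F#}"
proof -
  have c: "c \<notin> syms_ms (add_mset (Ex B) G)" "c \<notin> syms_ms D"
    using assms(1) by auto
  have "I_provable_with (- {AllL}) ({#} + add_mset (Ex B) G) {#F#}"
  proof (rule I_exL_fresh[where A = "syms_ms D" and c = c])
    fix d assume d: "d \<notin> syms_ms D"
    let ?\<pi> = "transpose c d"
    have "ren_fm ?\<pi> A = A" if "A \<in># D" for A
      using that c d by (intro ren_fm_transpose_fresh) (auto simp: syms_ms_def)
    then have "covers (ren_fm ?\<pi> F) D"
      using assms(2) by (force simp: covers_def disjuncts_ren_fm)
    then show "I_provable_with (- {AllL}) (ren_ms ?\<pi> {#} + add_mset (subst0 B (Fn c [])) G)
        (ren_ms ?\<pi> {#F#})"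
      using IH by simp
  qed (use c in auto)
  then show ?thesis by simp
qed

lemma I_provable_if_covers:
  "C_provable_with (UNIV - {ImpR, AllL}) G D \<Longrightarrow> covers F D \<Longrightarrow> I_provable_with (- {AllL}) G {#F#}"
proof (induction arbitrary: F rule: deriv.induct)
  case (ax G D)
  show ?case using ax.hyps(2) ax.prems by (rule I_axiom_covers)
next
  case (contrL B G D)
  then show ?case by (auto intro: deriv.contrL)
next
  case (andL1 B C G D)
  then show ?case by (auto intro: deriv.andL1)
next
  case (andL2 B C G D)
  then show ?case by (auto intro: deriv.andL2)
next
  case (orL B C G D)
  then show ?case by (auto intro: deriv.orL)
next
  case (andR G B C D)
  from andR.prems have F: "covers F D" "And B C \<in> disjuncts F"
    by (simp_all add: covers_add_mset)
  show ?case by (rule I_Or_And_elim[OF andR.IH(1,2)[OF covers_Or[OF F(1)]] F(2)])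
next
  case (orR1 G B C D)
  then show ?case using disjuncts_trans by (fastforce simp: covers_add_mset)
next
  case (orR2 G B C D)
  then show ?case using disjuncts_trans by (fastforce simp: covers_add_mset)
next
  case (impL B C G D T)
  from impL.prems have F: "covers F D" "covers F T"
    by (simp_all add: covers_def)
  show ?case by (rule I_Or_Imp_elim[OF impL.IH(1)[OF covers_Or[OF F(1)]] impL.IH(2)[OF F(2)]])
next
  case (exR G B D t)
  from exR.prems have F: "covers F D" "Ex B \<in> disjuncts F"
    by (simp_all add: covers_add_mset)
  show ?case by (rule I_Or_Ex_elim[OF exR.IH[OF covers_Or[OF F(1)]] exR.hyps(3) F(2)])
next
  case (allR G B D c)
  from allR.prems have F: "covers F D" "All B \<in> disjuncts F"
    by (simp_all add: covers_add_mset)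
  show ?case
    by (rule I_Or_All_elim[OF allR.IH[OF covers_Or[OF F(1)]] _ F(2)]) (use allR.hyps(3) in simp)
next
  case (exL B G D c)
  show ?case using exL.hyps(3) exL.prems exL.IH by (rule I_exL_covers)
qed (auto simp: covers_add_mset)

theorem theorem5:
  fixes \<Gamma> :: "fm multiset" and Bs :: "fm list"
  assumes "\<forall>A\<in>#\<Gamma>. formula_ok A"
    and "\<forall>B\<in>set Bs. formula_ok B"
    and "Bs \<noteq> []"
    and "C_provable_with (UNIV - {ImpR, AllL}) \<Gamma> (mset Bs)"
  shows "I_provable \<Gamma> {# disj Bs #}
         \<and> (length Bs = 1 \<longrightarrow> I_provable \<Gamma> {# hd Bs #})"
proof -
  have "covers (disj Bs) (mset Bs)"
    by (auto simp: covers_def in_disjuncts_disj)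
  with assms(4) have "I_provable_with (- {AllL}) \<Gamma> {#disj Bs#}"
    by (rule I_provable_if_covers)
  then have "I_provable \<Gamma> {#disj Bs#}"
    by (rule deriv_mono_rules) simp
  moreover have "length Bs = 1 \<longrightarrow> disj Bs = hd Bs"
    by (cases Bs rule: disj.cases) auto
  ultimately show ?thesis by auto
qed

end
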